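(* Let $\mathbb O'_+=\{x\in\mathbb O':|x|^2>0\}$ and $\mathcal U=U_1\cup U_2\cup U_3\subset\mathbb O'^3$ with $U_1=\{(1,y,z):1+|y|^2+|z|^2>0\}$, $U_2=\{(x,1,z):|x|^2+1+|z|^2>0\}$, $U_3=\{(x,y,1):|x|^2+|y|^2+1>0\}$. The relation on $\mathcal U$ given by $[a,b,c]\sim[d,e,f]$ iff there exists $\lambda\in\mathbb O'_+$ with $a=d\lambda$, $b=e\lambda$, $c=f\lambda$ is an equivalence relation.
   Context: The para-octonions $\mathbb O'$ are $\mathbb H\oplus\mathbb H$ with multiplication $(q_1,q_2)(p_1,p_2)=(q_1p_1+\bar p_2q_2,\ p_2q_1+q_2\bar p_1)$, unit $(1,0)$, conjugation $\overline{(q_1,q_2)}=(\bar q_1,-q_2)$, inner product $\langle a,b\rangle=\mathrm{Re}(a\bar b)$ (real part of the first quaternion component) and $|a|^2=\langle a,a\rangle=|q_1|^2-|q_2|^2$ for $a=(q_1,q_2)$; this form has signature $(4,4)$ and satisfies $|ab|^2=|a|^2|b|^2$. *)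

theory Defs
  imports Complex_Main
begin

datatype quat = Quat (qre: real) (qi: real) (qj: real) (qk: real)

definition qadd :: "quat \<Rightarrow> quat \<Rightarrow> quat" where
  "qadd p q = Quat (qre p + qre q) (qi p + qi q) (qj p + qj q) (qk p + qk q)"

definition qmult :: "quat \<Rightarrow> quat \<Rightarrow> quat" where
  "qmult p q = Quat
     (qre p * qre q - qi p * qi q - qj p * qj q - qk p * qk q)
     (qre p * qi q + qi p * qre q + qj p * qk q - qk p * qj q)
     (qre p * qj q - qi p * qk q + qj p * qre q + qk p * qi q)
     (qre p * qk q + qi p * qj q - qj p * qi q + qk p * qre q)"

definition qcnj :: "quat \<Rightarrow> quat" where
  "qcnj q = Quat (qre q) (- qi q) (- qj q) (- qk q)"

definition qnorm2 :: "quat \<Rightarrow> real" where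
  "qnorm2 q = (qre q)\<^sup>2 + (qi q)\<^sup>2 + (qj q)\<^sup>2 + (qk q)\<^sup>2"

definition qzero :: quat where "qzero = Quat 0 0 0 0"
definition qone :: quat where "qone = Quat 1 0 0 0"

type_synonym paraoct = "quat \<times> quat"

definition pmult :: "paraoct \<Rightarrow> paraoct \<Rightarrow> paraoct" where
  "pmult a b = (case a of (q1, q2) \<Rightarrow> case b of (p1, p2) \<Rightarrow>
      (qadd (qmult q1 p1) (qmult (qcnj p2) q2), qadd (qmult p2 q1) (qmult q2 (qcnj p1))))"

definition pone :: paraoct where "pone = (qone, qzero)"

definition pnorm2 :: "paraoct \<Rightarrow> real" where
  "pnorm2 a = qnorm2 (fst a) - qnorm2 (snd a)"

definition Oplus :: "paraoct set" where
  "Oplus = {x. pnorm2 x > 0}"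

definition U1 :: "(paraoct \<times> paraoct \<times> paraoct) set" where
  "U1 = {(x, y, z). x = pone \<and> 1 + pnorm2 y + pnorm2 z > 0}"
definition U2 :: "(paraoct \<times> paraoct \<times> paraoct) set" where
  "U2 = {(x, y, z). y = pone \<and> pnorm2 x + 1 + pnorm2 z > 0}"
definition U3 :: "(paraoct \<times> paraoct \<times> paraoct) set" where
  "U3 = {(x, y, z). z = pone \<and> pnorm2 x + pnorm2 y + 1 > 0}"

definition Ucal :: "(paraoct \<times> paraoct \<times> paraoct) set" where
  "Ucal = U1 \<union> U2 \<union> U3"

definition proj_rel :: "((paraoct \<times> paraoct \<times> paraoct) \<times> (paraoct \<times> paraoct \<times> paraoct)) set" where
  "proj_rel = {((a, b, c), (d, e, f)). (a, b, c) \<in> Ucal \<and> (d, e, f) \<in> Ucal \<and>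
      (\<exists>l\<in>Oplus. a = pmult d l \<and> b = pmult e l \<and> c = pmult f l)}"

end

theory Submission imports Defs begin

text \<open>The product of the para-octonions is not associative, so only transitivity needs
  work: from \<open>x = y l\<close> and \<open>y = w m\<close> coordinatewise we want \<open>x = w (m l)\<close>, i.e.
  \<open>(z m) l = z (m l)\<close> for each coordinate \<open>z\<close> of \<open>w\<close>. The conjugation identities
  \<open>cnj x (x y) = |x|\<^sup>2 y\<close>, \<open>x (cnj x y) = |x|\<^sup>2 y\<close> and \<open>(y x) cnj x = |x|\<^sup>2 y\<close>
  give this associativity as soon as one of \<open>z, m, l, z m, m l, (z m) l\<close> is the unit.
  Each of \<open>w\<close>, \<open>y\<close>, \<open>x\<close> has a coordinate equal to the unit; for a coordinate \<open>z\<close> of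
  \<open>w\<close> that is none of these three, two of the three unit positions coincide, which
  forces \<open>m = 1\<close>, \<open>l = 1\<close> or \<open>m l = 1\<close>.\<close>

definition pscale :: "real \<Rightarrow> paraoct \<Rightarrow> paraoct" where
  "pscale r a = (Quat (r * qre (fst a)) (r * qi (fst a)) (r * qj (fst a)) (r * qk (fst a)),
                 Quat (r * qre (snd a)) (r * qi (snd a)) (r * qj (snd a)) (r * qk (snd a)))"

definition pcnj :: "paraoct \<Rightarrow> paraoct" where
  "pcnj a = (qcnj (fst a), Quat (- qre (snd a)) (- qi (snd a)) (- qj (snd a)) (- qk (snd a)))"

definition pinv :: "paraoct \<Rightarrow> paraoct" where
  "pinv a = pscale (1 / pnorm2 a) (pcnj a)"

lemma paraoct_cases:
  obtains a b c d e f g h where "x = (Quat a b c d, Quat e f g h)"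
  by (metis prod.exhaust quat.exhaust)

lemmas paraoct_defs = pmult_def pscale_def pcnj_def qadd_def qmult_def qcnj_def
  pnorm2_def qnorm2_def pone_def qone_def qzero_def

lemma pmult_pone_left [simp]: "pmult pone x = x"
  by (cases x rule: paraoct_cases) (simp add: paraoct_defs)

lemma pmult_pone_right [simp]: "pmult x pone = x"
  by (cases x rule: paraoct_cases) (simp add: paraoct_defs)

lemma pnorm2_pone [simp]: "pnorm2 pone = 1"
  by (simp add: paraoct_defs)

lemma pnorm2_pmult: "pnorm2 (pmult x y) = pnorm2 x * pnorm2 y"
  by (cases x rule: paraoct_cases; cases y rule: paraoct_cases)
    (simp add: paraoct_defs power2_eq_square algebra_simps)

lemma pnorm2_pscale: "pnorm2 (pscale r x) = r\<^sup>2 * pnorm2 x"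
  by (cases x rule: paraoct_cases) (simp add: paraoct_defs power2_eq_square algebra_simps)

lemma pnorm2_pcnj: "pnorm2 (pcnj x) = pnorm2 x"
  by (cases x rule: paraoct_cases) (simp add: paraoct_defs)

lemma pcnj_pmult: "pcnj (pmult x y) = pmult (pcnj y) (pcnj x)"
  by (cases x rule: paraoct_cases; cases y rule: paraoct_cases)
    (simp add: paraoct_defs algebra_simps)

lemma pscale_pscale: "pscale r (pscale s x) = pscale (r * s) x"
  by (cases x rule: paraoct_cases) (simp add: paraoct_defs)

lemma pscale_one [simp]: "pscale 1 x = x"
  by (cases x rule: paraoct_cases) (simp add: paraoct_defs)

lemma pmult_pscale_left: "pmult (pscale r x) y = pscale r (pmult x y)"
  by (cases x rule: paraoct_cases; cases y rule: paraoct_cases)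
    (simp add: paraoct_defs algebra_simps)

lemma pmult_pscale_right: "pmult x (pscale r y) = pscale r (pmult x y)"
  by (cases x rule: paraoct_cases; cases y rule: paraoct_cases)
    (simp add: paraoct_defs algebra_simps)

lemma pcnj_pmult_cancel_left: "pmult (pcnj x) (pmult x y) = pscale (pnorm2 x) y"
  by (cases x rule: paraoct_cases; cases y rule: paraoct_cases)
    (simp add: paraoct_defs power2_eq_square algebra_simps)

lemma pmult_pcnj_cancel_left: "pmult x (pmult (pcnj x) y) = pscale (pnorm2 x) y"
  by (cases x rule: paraoct_cases; cases y rule: paraoct_cases)
    (simp add: paraoct_defs power2_eq_square algebra_simps)

lemma pmult_pcnj_cancel_right: "pmult (pmult y x) (pcnj x) = pscale (pnorm2 x) y"
  by (cases x rule: paraoct_cases; cases y rule: paraoct_cases)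
    (simp add: paraoct_defs power2_eq_square algebra_simps)

lemma pinv_pmult_cancel_left: "pnorm2 x \<noteq> 0 \<Longrightarrow> pmult (pinv x) (pmult x y) = y"
  by (simp add: pinv_def pmult_pscale_left pcnj_pmult_cancel_left pscale_pscale)

lemma pmult_pinv_cancel_left: "pnorm2 x \<noteq> 0 \<Longrightarrow> pmult x (pmult (pinv x) y) = y"
  by (simp add: pinv_def pmult_pscale_left pmult_pscale_right pmult_pcnj_cancel_left pscale_pscale)

lemma pmult_pinv_cancel_right: "pnorm2 x \<noteq> 0 \<Longrightarrow> pmult (pmult y x) (pinv x) = y"
  by (simp add: pinv_def pmult_pscale_right pmult_pcnj_cancel_right pscale_pscale)

lemma pmult_pinv_right: "pnorm2 x \<noteq> 0 \<Longrightarrow> pmult x (pinv x) = pone"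
  using pmult_pinv_cancel_left [of x pone] by simp

lemma pnorm2_pinv: "pnorm2 (pinv x) = 1 / pnorm2 x"
  by (simp add: pinv_def pnorm2_pscale pnorm2_pcnj power2_eq_square)

lemma pinv_pmult: "pinv (pmult x y) = pmult (pinv y) (pinv x)"
  by (simp add: pinv_def pcnj_pmult pnorm2_pmult pmult_pscale_left pmult_pscale_right
      pscale_pscale mult.commute)

lemma pmult_eq_pone_imp_pnorm2_nonzero:
  "pmult x y = pone \<Longrightarrow> pnorm2 x \<noteq> 0 \<and> pnorm2 y \<noteq> 0"
  using pnorm2_pmult [of x y] by auto

lemma pmult_eq_pone_imp_right_eq_pinv: "pmult x y = pone \<Longrightarrow> y = pinv x"
  by (metis pinv_pmult_cancel_left pmult_eq_pone_imp_pnorm2_nonzero pmult_pone_right)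

lemma pmult_eq_pone_imp_left_eq_pinv: "pmult x y = pone \<Longrightarrow> x = pinv y"
  by (metis pmult_pinv_cancel_right pmult_eq_pone_imp_pnorm2_nonzero pmult_pone_left)

lemma pmult_assoc_if_pone:
  assumes "pone \<in> {z, m, l, pmult z m, pmult m l, pmult (pmult z m) l}"
  shows "pmult (pmult z m) l = pmult z (pmult m l)"
proof -
  consider "z = pone \<or> m = pone \<or> l = pone" | "pmult z m = pone" | "pmult m l = pone"
    | "pmult (pmult z m) l = pone"
    using assms by auto
  then show ?thesis
  proof cases
    case 2
    then have "z = pinv m" "pnorm2 m \<noteq> 0"
      using pmult_eq_pone_imp_left_eq_pinv pmult_eq_pone_imp_pnorm2_nonzero by blast+
    with 2 show ?thesis by (simp add: pinv_pmult_cancel_left)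
  next
    case 3
    then have "l = pinv m" "pnorm2 m \<noteq> 0"
      using pmult_eq_pone_imp_right_eq_pinv pmult_eq_pone_imp_pnorm2_nonzero by blast+
    with 3 show ?thesis by (simp add: pmult_pinv_cancel_right)
  next
    case 4
    then have l: "l = pmult (pinv m) (pinv z)"
      using pmult_eq_pone_imp_right_eq_pinv pinv_pmult by metis
    have "pnorm2 z \<noteq> 0" "pnorm2 m \<noteq> 0"
      using 4 pmult_eq_pone_imp_pnorm2_nonzero pnorm2_pmult by (metis mult_eq_0_iff)+
    then have "pmult z (pmult m l) = pone"
      by (simp add: l pmult_pinv_cancel_left pmult_pinv_right)
    with 4 show ?thesis by simp
  qed auto
qed

lemma pone_in_Oplus: "pone \<in> Oplus"
  by (simp add: Oplus_def)

lemma pmult_in_Oplus: "x \<in> Oplus \<Longrightarrow> y \<in> Oplus \<Longrightarrow> pmult x y \<in> Oplus"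
  by (simp add: Oplus_def pnorm2_pmult)

lemma pinv_in_Oplus: "x \<in> Oplus \<Longrightarrow> pinv x \<in> Oplus"
  by (simp add: Oplus_def pnorm2_pinv)

definition tmult :: "paraoct \<times> paraoct \<times> paraoct \<Rightarrow> paraoct \<Rightarrow> paraoct \<times> paraoct \<times> paraoct" where
  "tmult x l = (case x of (d, e, f) \<Rightarrow> (pmult d l, pmult e l, pmult f l))"

lemma proj_rel_iff:
  "(x, y) \<in> proj_rel \<longleftrightarrow> x \<in> Ucal \<and> y \<in> Ucal \<and> (\<exists>l\<in>Oplus. x = tmult y l)"
  by (cases x; cases y) (auto simp: proj_rel_def tmult_def)

lemma tmult_pone [simp]: "tmult x pone = x"
  by (simp add: tmult_def split: prod.split)

lemma tmult_tmult_pinv: "pnorm2 l \<noteq> 0 \<Longrightarrow> tmult (tmult x l) (pinv l) = x"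
  by (cases x rule: prod_cases3) (simp add: tmult_def pmult_pinv_cancel_right)

lemma Ucal_has_pone: "(a, b, c) \<in> Ucal \<Longrightarrow> pone \<in> {a, b, c}"
  by (auto simp: Ucal_def U1_def U2_def U3_def)

lemma tmult_tmult_Ucal:
  assumes "w \<in> Ucal" "tmult w m \<in> Ucal" "tmult (tmult w m) l \<in> Ucal"
  shows "tmult (tmult w m) l = tmult w (pmult m l)"
proof -
  obtain g h k where w: "w = (g, h, k)"
    by (cases w)
  have units: "pone \<in> {g, h, k}" "pone \<in> {pmult g m, pmult h m, pmult k m}"
    "pone \<in> {pmult (pmult g m) l, pmult (pmult h m) l, pmult (pmult k m) l}"
    using assms Ucal_has_pone by (simp_all add: w tmult_def)
  have "pmult (pmult z m) l = pmult z (pmult m l)" if "z \<in> {g, h, k}" for z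
  proof (rule pmult_assoc_if_pone)
    show "pone \<in> {z, m, l, pmult z m, pmult m l, pmult (pmult z m) l}"
      using that units by auto
  qed
  then show ?thesis
    by (simp add: w tmult_def)
qed

theorem lemma6p1:
  shows "equiv Ucal proj_rel"
proof (rule equivI)
  show "proj_rel \<subseteq> Ucal \<times> Ucal"
    by (auto simp: proj_rel_iff)
  show "refl_on Ucal proj_rel"
    by (rule refl_onI) (auto simp: proj_rel_iff intro: bexI [OF _ pone_in_Oplus])
  show "sym proj_rel"
  proof (rule symI)
    fix x y
    assume "(x, y) \<in> proj_rel"
    then obtain l where "x \<in> Ucal" "y \<in> Ucal" "l \<in> Oplus" "x = tmult y l"
      by (auto simp: proj_rel_iff)
    moreover have "pnorm2 l \<noteq> 0"
      using \<open>l \<in> Oplus\<close> by (simp add: Oplus_def)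
    ultimately show "(y, x) \<in> proj_rel"
      by (auto simp: proj_rel_iff tmult_tmult_pinv intro!: bexI [of _ "pinv l"] pinv_in_Oplus)
  qed
  show "trans proj_rel"
  proof (rule transI)
    fix x y w
    assume "(x, y) \<in> proj_rel" "(y, w) \<in> proj_rel"
    then obtain l m where Ucal: "x \<in> Ucal" "y \<in> Ucal" "w \<in> Ucal"
      and "l \<in> Oplus" "m \<in> Oplus" and x: "x = tmult y l" and y: "y = tmult w m"
      by (auto simp: proj_rel_iff)
    have "x = tmult w (pmult m l)"
      using tmult_tmult_Ucal Ucal by (simp add: x y)
    with Ucal \<open>l \<in> Oplus\<close> \<open>m \<in> Oplus\<close> show "(x, w) \<in> proj_rel"
      by (auto simp: proj_rel_iff intro: pmult_in_Oplus)
  qed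
qed

end
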